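(* Let $(X,\beta)$ be a locally finite prechart and $x,y\in X$ with $x\not\sim y$. Then there exists $i\in\mathbb{N}$ such that $\Phi^{(i)}_\beta(x,y)=\Phi^{(i+1)}_\beta(x,y)$.
   Context: Fix a set $V=\{v_1,v_2,\dots\}$ of variables and a set $\Sigma$ of letters. A prechart is a pair $(X,\beta)$ with $\beta:X\to P_{\mathrm{fin}}(\Sigma\times X+V)$; write $x\xrightarrow{a}x'$ iff $(a,x')\in\beta(x)$ and $E(x)=\beta(x)\cap V$. It is locally finite if from each state only finitely many states are reachable. A bisimulation is a relation $R\subseteq X\times X$ such that whenever $(x,y)\in R$: $E(x)=E(y)$; each $x\xrightarrow{a}x'$ is matched by some $y\xrightarrow{a}y'$ with $(x',y')\in R$; and symmetrically; $x\sim y$ iff related by some bisimulation. A 1-bounded pseudometric on $X$ is $d:X\times X\to[0,1]$ with $d(x,x)=0$, symmetry and triangle inequality. The discrete pseudometric is $\top(x,y)=0$ if $x=y$, $1$ otherwise. For a pseudometric $d$, $d^\uparrow$ on $\Sigma\times X+V$ is $d^\uparrow((a,x),(a,y))=\tfrac12 d(x,y)$, $d^\uparrow(m,n)=0$ if $m=n$, $1$ otherwise. $\mathcal H(d)(A,B)=\max\{\sup_{x\in A}\inf_{y\in B}d(x,y),\sup_{y\in B}\inf_{x\in A}d(y,x)\}$ with $\sup\emptyset=0$, $\inf\emptyset=1$. $\Phi_\beta(d)(x,y)=\mathcal H(d^\uparrow)(\beta(x),\beta(y))$; $\Phi^{(0)}_\beta=\top$, $\Phi^{(i+1)}_\beta=\Phi_\beta(\Phi^{(i)}_\beta)$.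 *)

theory Defs
  imports Main "HOL-Library.Extended_Real"
begin

text \<open>States X are the elements of the type 'x, letters the type 'a, and the variables
  V = {v1, v2, ...} are represented by nat.\<close>

type_synonym ('a, 'x) prechart = "'x \<Rightarrow> (('a \<times> 'x) + nat) set"

definition prechart :: "('a, 'x) prechart \<Rightarrow> bool" where
  "prechart \<beta> \<longleftrightarrow> (\<forall>x. finite (\<beta> x))"

definition trans_step :: "('a, 'x) prechart \<Rightarrow> 'x \<Rightarrow> 'a \<Rightarrow> 'x \<Rightarrow> bool" where
  "trans_step \<beta> x a x' \<longleftrightarrow> Inl (a, x') \<in> \<beta> x"

definition E :: "('a, 'x) prechart \<Rightarrow> 'x \<Rightarrow> nat set" where
  "E \<beta> x = {v. Inr v \<in> \<beta> x}"

definition step_rel :: "('a, 'x) prechart \<Rightarrow> ('x \<times> 'x) set" where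
  "step_rel \<beta> = {(x, x'). \<exists>a. trans_step \<beta> x a x'}"

definition locally_finite :: "('a, 'x) prechart \<Rightarrow> bool" where
  "locally_finite \<beta> \<longleftrightarrow> (\<forall>x. finite {y. (x, y) \<in> (step_rel \<beta>)\<^sup>*})"

definition bisimulation :: "('a, 'x) prechart \<Rightarrow> ('x \<times> 'x) set \<Rightarrow> bool" where
  "bisimulation \<beta> R \<longleftrightarrow> (\<forall>(x, y) \<in> R.
      E \<beta> x = E \<beta> y
    \<and> (\<forall>a x'. trans_step \<beta> x a x' \<longrightarrow> (\<exists>y'. trans_step \<beta> y a y' \<and> (x', y') \<in> R))
    \<and> (\<forall>a y'. trans_step \<beta> y a y' \<longrightarrow> (\<exists>x'. trans_step \<beta> x a x' \<and> (x', y') \<in> R)))"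

definition bisimilar :: "('a, 'x) prechart \<Rightarrow> 'x \<Rightarrow> 'x \<Rightarrow> bool" where
  "bisimilar \<beta> x y \<longleftrightarrow> (\<exists>R. bisimulation \<beta> R \<and> (x, y) \<in> R)"

definition top_dist :: "'x \<Rightarrow> 'x \<Rightarrow> real" where
  "top_dist x y = (if x = y then 0 else 1)"

fun lift_dist :: "('x \<Rightarrow> 'x \<Rightarrow> real) \<Rightarrow> ('a \<times> 'x) + nat \<Rightarrow> ('a \<times> 'x) + nat \<Rightarrow> real" where
  "lift_dist d (Inl (a, x)) (Inl (b, y)) =
     (if a = b then d x y / 2 else 1)"
| "lift_dist d m n = (if m = n then 0 else 1)"

definition sup0 :: "'b set \<Rightarrow> ('b \<Rightarrow> real) \<Rightarrow> real" where
  "sup0 A f = (if A = {} then 0 else (SUP x\<in>A. f x))"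

definition inf1 :: "'b set \<Rightarrow> ('b \<Rightarrow> real) \<Rightarrow> real" where
  "inf1 A f = (if A = {} then 1 else (INF x\<in>A. f x))"

definition hausdorff :: "('b \<Rightarrow> 'b \<Rightarrow> real) \<Rightarrow> 'b set \<Rightarrow> 'b set \<Rightarrow> real" where
  "hausdorff d A B = max (sup0 A (\<lambda>x. inf1 B (\<lambda>y. d x y)))
                         (sup0 B (\<lambda>y. inf1 A (\<lambda>x. d y x)))"

definition Phi :: "('a, 'x) prechart \<Rightarrow> ('x \<Rightarrow> 'x \<Rightarrow> real) \<Rightarrow> 'x \<Rightarrow> 'x \<Rightarrow> real" where
  "Phi \<beta> d x y = hausdorff (lift_dist d) (\<beta> x) (\<beta> y)"

primrec Phi_iter :: "('a, 'x) prechart \<Rightarrow> nat \<Rightarrow> 'x \<Rightarrow> 'x \<Rightarrow> real" where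
  "Phi_iter \<beta> 0 = top_dist"
| "Phi_iter \<beta> (Suc i) = Phi \<beta> (Phi_iter \<beta> i)"

end

theory Submission
  imports Defs
begin

text \<open>All iterates take values in \<open>{0} \<union> {2^-k | k}\<close> and decrease with \<open>i\<close>. If the
  sequence \<open>Phi_iter \<beta> i x y\<close> never stabilised it would decrease strictly, hence drop below
  \<open>2^-i\<close> at step \<open>i\<close> and tend to \<open>0\<close>. But the pairs whose iterates tend to \<open>0\<close> form a
  bisimulation: since every \<open>\<beta> u\<close> is finite, a transition of \<open>u\<close> staying a fixed positive
  distance away from all matching transitions of \<open>v\<close> would bound all iterates at \<open>(u, v)\<close>
  from below.\<close>

lemma sup0_upper: "finite A \<Longrightarrow> a \<in> A \<Longrightarrow> f a \<le> sup0 A f"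
  unfolding sup0_def by (auto intro: cSUP_upper)

lemma sup0_least: "(\<And>a. a \<in> A \<Longrightarrow> f a \<le> c) \<Longrightarrow> 0 \<le> c \<Longrightarrow> sup0 A f \<le> c"
  unfolding sup0_def by (auto intro: cSUP_least)

lemma sup0_mono: "finite A \<Longrightarrow> (\<And>a. a \<in> A \<Longrightarrow> f a \<le> g a) \<Longrightarrow> sup0 A f \<le> sup0 A g"
  unfolding sup0_def by (auto intro!: cSUP_mono)

lemma sup0_in: "finite A \<Longrightarrow> sup0 A f \<in> insert 0 (f ` A)"
  unfolding sup0_def by (auto intro: Max_in simp: cSup_eq_Max)

lemma inf1_lower: "finite A \<Longrightarrow> a \<in> A \<Longrightarrow> inf1 A f \<le> f a"
  unfolding inf1_def by (auto intro: cINF_lower)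

lemma inf1_greatest: "(\<And>a. a \<in> A \<Longrightarrow> c \<le> f a) \<Longrightarrow> c \<le> 1 \<Longrightarrow> c \<le> inf1 A f"
  unfolding inf1_def by (auto intro: cINF_greatest)

lemma inf1_mono: "finite A \<Longrightarrow> (\<And>a. a \<in> A \<Longrightarrow> f a \<le> g a) \<Longrightarrow> inf1 A f \<le> inf1 A g"
  unfolding inf1_def by (auto intro!: cINF_mono)

lemma inf1_in: "finite A \<Longrightarrow> inf1 A f \<in> insert 1 (f ` A)"
  unfolding inf1_def by (auto intro: Min_in simp: cInf_eq_Min)

lemma hausdorff_commute: "hausdorff d A B = hausdorff d B A"
  unfolding hausdorff_def by simp

lemma hausdorff_lower:
  "finite A \<Longrightarrow> a \<in> A \<Longrightarrow> inf1 B (d a) \<le> hausdorff d A B"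
  unfolding hausdorff_def by (auto intro: le_max_iff_disj[THEN iffD2] sup0_upper)

lemma hausdorff_mono:
  assumes "finite A" "finite B" "\<And>a b. d a b \<le> d' a b"
  shows "hausdorff d A B \<le> hausdorff d' A B"
  unfolding hausdorff_def
  by (intro max.mono sup0_mono inf1_mono assms)

lemma hausdorff_self_le_0:
  assumes "finite A" "\<And>a. a \<in> A \<Longrightarrow> d a a = 0"
  shows "hausdorff d A A \<le> 0"
proof -
  have "inf1 A (d a) \<le> 0" if "a \<in> A" for a
    using inf1_lower[OF assms(1) that, of "d a"] assms(2)[OF that] by simp
  then show ?thesis
    unfolding hausdorff_def by (auto intro: sup0_least)
qed

lemma hausdorff_in:
  assumes "finite A" "finite B" "0 \<in> S" "1 \<in> S" "\<And>a b. d a b \<in> S"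
  shows "hausdorff d A B \<in> S"
proof -
  have inf1_in_S: "inf1 C g \<in> S" if "finite C" "\<And>c. g c \<in> S" for C g
    using inf1_in[OF that(1), of g] that(2) assms(4) by auto
  have sup0_in_S: "sup0 C g \<in> S" if "finite C" "\<And>c. g c \<in> S" for C g
    using sup0_in[OF that(1), of g] that(2) assms(3) by auto
  show ?thesis
    unfolding hausdorff_def max_def by (simp add: inf1_in_S sup0_in_S assms)
qed

lemma lift_dist_mono: "(\<And>p q. d p q \<le> d' p q) \<Longrightarrow> lift_dist d m n \<le> lift_dist d' m n"
  by (cases "(d, m, n)" rule: lift_dist.cases) auto

lemma lift_dist_self: "(\<And>p. d p p = 0) \<Longrightarrow> lift_dist d m m = 0"
  by (cases "(d, m, m)" rule: lift_dist.cases) auto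

lemma lift_dist_in:
  "0 \<in> S \<Longrightarrow> 1 \<in> S \<Longrightarrow> (\<And>s. s \<in> S \<Longrightarrow> s / 2 \<in> S) \<Longrightarrow> (\<And>p q. d p q \<in> S)
    \<Longrightarrow> lift_dist d m n \<in> S"
  by (cases "(d, m, n)" rule: lift_dist.cases) auto

lemma prechart_finite: "prechart \<beta> \<Longrightarrow> finite (\<beta> u)"
  unfolding prechart_def by blast

lemma finite_successors:
  assumes "prechart \<beta>"
  shows "finite {v'. trans_step \<beta> v a v'}"
proof -
  have "{v'. trans_step \<beta> v a v'} \<subseteq> snd ` (Inl -` \<beta> v)"
    unfolding trans_step_def by (auto intro: image_eqI[where x = "(a, _)"])
  moreover have "finite (Inl -` \<beta> v)"
    using prechart_finite[OF assms] by (auto intro: finite_vimageI)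
  ultimately show ?thesis
    by (auto intro: finite_subset)
qed

lemma Phi_commute: "Phi \<beta> d u v = Phi \<beta> d v u"
  unfolding Phi_def by (rule hausdorff_commute)

lemma Phi_mono: "prechart \<beta> \<Longrightarrow> (\<And>p q. d p q \<le> d' p q) \<Longrightarrow> Phi \<beta> d u v \<le> Phi \<beta> d' u v"
  unfolding Phi_def by (intro hausdorff_mono prechart_finite lift_dist_mono)

lemma Phi_self_le_0: "prechart \<beta> \<Longrightarrow> (\<And>p. d p p = 0) \<Longrightarrow> Phi \<beta> d u u \<le> 0"
  unfolding Phi_def by (intro hausdorff_self_le_0 prechart_finite lift_dist_self)

lemma Phi_in:
  "prechart \<beta> \<Longrightarrow> 0 \<in> S \<Longrightarrow> 1 \<in> S \<Longrightarrow> (\<And>s. s \<in> S \<Longrightarrow> s / 2 \<in> S) \<Longrightarrow> (\<And>p q. d p q \<in> S)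
    \<Longrightarrow> Phi \<beta> d u v \<in> S"
  unfolding Phi_def by (intro hausdorff_in prechart_finite lift_dist_in)

lemma Phi_ge_1_if_variable_unmatched:
  assumes "prechart \<beta>" "Inr n \<in> \<beta> u" "Inr n \<notin> \<beta> v"
  shows "1 \<le> Phi \<beta> d u v"
proof -
  have "1 \<le> inf1 (\<beta> v) (lift_dist d (Inr n))"
  proof (rule inf1_greatest)
    fix m assume "m \<in> \<beta> v"
    with assms(3) show "1 \<le> lift_dist d (Inr n) m"
      by (cases m) auto
  qed simp
  also have "\<dots> \<le> Phi \<beta> d u v"
    unfolding Phi_def by (intro hausdorff_lower prechart_finite assms)
  finally show ?thesis .
qed

lemma Phi_ge_if_transition_unmatched:
  assumes "prechart \<beta>" "trans_step \<beta> u a u'" "c \<le> 1"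
    and far: "\<And>v'. trans_step \<beta> v a v' \<Longrightarrow> c \<le> d u' v'"
  shows "c / 2 \<le> Phi \<beta> d u v"
proof -
  have "c / 2 \<le> inf1 (\<beta> v) (lift_dist d (Inl (a, u')))"
  proof (rule inf1_greatest)
    fix m assume m: "m \<in> \<beta> v"
    show "c / 2 \<le> lift_dist d (Inl (a, u')) m"
    proof (cases m)
      case (Inl bv')
      with m far[of "snd bv'"] assms(3) show ?thesis
        by (cases bv') (auto simp: trans_step_def)
    qed (use assms(3) in simp)
  qed (use assms(3) in simp)
  also have "\<dots> \<le> Phi \<beta> d u v"
    using assms(2) unfolding Phi_def trans_step_def
    by (intro hausdorff_lower prechart_finite assms(1))
  finally show ?thesis .
qed

definition half_powers :: "real set" where
  "half_powers = insert 0 (range (\<lambda>k. (1/2) ^ k))"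

lemma zero_in_half_powers: "0 \<in> half_powers"
  and one_in_half_powers: "1 \<in> half_powers"
  unfolding half_powers_def by (auto intro: image_eqI[where x = 0])

lemma half_in_half_powers: "s \<in> half_powers \<Longrightarrow> s / 2 \<in> half_powers"
  unfolding half_powers_def by (auto intro: image_eqI[where x = "Suc _"])

lemma half_powers_bounds: "s \<in> half_powers \<Longrightarrow> 0 \<le> s \<and> s \<le> 1"
  unfolding half_powers_def by (auto simp: power_le_one)

lemma half_powers_less_imp_le:
  assumes "s \<in> half_powers" "s < (1/2) ^ i"
  shows "s \<le> (1/2) ^ Suc i"
proof -
  consider "s = 0" | k where "s = (1/2) ^ k"
    using assms(1) unfolding half_powers_def by auto
  then show ?thesis
  proof cases
    case (2 k)
    with assms(2) have "Suc i \<le> k"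
      by (simp add: power_strict_decreasing_iff Suc_le_eq)
    then show ?thesis
      using 2 power_decreasing[of "Suc i" k "1/2 :: real"] by simp
  qed simp
qed

lemma half_powers_strict_decseq_le:
  assumes "\<And>i. f i \<in> half_powers" "\<And>i. f (Suc i) < f i"
  shows "f i \<le> (1/2) ^ i"
proof (induction i)
  case 0
  show ?case using half_powers_bounds[OF assms(1)] by simp
next
  case (Suc i)
  with assms(2)[of i] have "f (Suc i) < (1/2) ^ i" by simp
  then show ?case by (rule half_powers_less_imp_le[OF assms(1)])
qed

lemma Phi_iter_in_half_powers: "prechart \<beta> \<Longrightarrow> Phi_iter \<beta> i u v \<in> half_powers"
proof (induction i arbitrary: u v)
  case 0
  show ?case by (simp add: top_dist_def zero_in_half_powers one_in_half_powers)
next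
  case (Suc i)
  then show ?case
    by (auto intro: Phi_in zero_in_half_powers one_in_half_powers half_in_half_powers)
qed

lemma Phi_iter_nonneg: "prechart \<beta> \<Longrightarrow> 0 \<le> Phi_iter \<beta> i u v"
  by (simp add: half_powers_bounds Phi_iter_in_half_powers)

lemma Phi_iter_commute: "Phi_iter \<beta> i u v = Phi_iter \<beta> i v u"
  by (cases i) (simp_all add: top_dist_def Phi_commute)

lemma Phi_iter_self: "prechart \<beta> \<Longrightarrow> Phi_iter \<beta> i u u = 0"
proof (induction i arbitrary: u)
  case (Suc i)
  then have "Phi_iter \<beta> (Suc i) u u \<le> 0"
    by (simp add: Phi_self_le_0)
  with Phi_iter_nonneg[OF Suc.prems] show ?case
    by (meson order.antisym)
qed (simp add: top_dist_def)

lemma Phi_iter_Suc_le: "prechart \<beta> \<Longrightarrow> Phi_iter \<beta> (Suc i) u v \<le> Phi_iter \<beta> i u v"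
proof (induction i arbitrary: u v)
  case 0
  show ?case
    using Phi_iter_self[OF 0] half_powers_bounds[OF Phi_iter_in_half_powers[OF 0]]
    by (cases "u = v") (simp_all add: top_dist_def del: Phi_iter.simps(2))
next
  case (Suc i)
  then show ?case
    using Phi_mono[of \<beta> "Phi_iter \<beta> (Suc i)" "Phi_iter \<beta> i"] by simp
qed

definition Phi_kernel :: "('a, 'x) prechart \<Rightarrow> ('x \<times> 'x) set" where
  "Phi_kernel \<beta> = {(u, v). \<forall>e>0. \<exists>i. Phi_iter \<beta> i u v < e}"

lemma Phi_kernel_commute: "(u, v) \<in> Phi_kernel \<beta> \<Longrightarrow> (v, u) \<in> Phi_kernel \<beta>"
  unfolding Phi_kernel_def by (simp add: Phi_iter_commute)

lemma Phi_kernelI: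
  assumes "\<And>i. Phi_iter \<beta> i u v \<le> (1/2) ^ i"
  shows "(u, v) \<in> Phi_kernel \<beta>"
  unfolding Phi_kernel_def
proof clarify
  fix e :: real assume "e > 0"
  then obtain i where "(1/2) ^ i < e"
    using real_arch_pow_inv[of e "1/2"] by auto
  with assms[of i] show "\<exists>i. Phi_iter \<beta> i u v < e"
    by (meson order.strict_trans1)
qed

lemma Phi_kernel_lower_bound:
  assumes "prechart \<beta>" "(u, v) \<in> Phi_kernel \<beta>" "\<And>i. c \<le> Phi_iter \<beta> (Suc i) u v"
  shows "c \<le> 0"
proof (rule ccontr)
  assume "\<not> c \<le> 0"
  then have "c > 0" by simp
  with assms(2) obtain i where "Phi_iter \<beta> i u v < c"
    unfolding Phi_kernel_def by auto
  with assms(3)[of i] Phi_iter_Suc_le[OF assms(1), of i u v] show False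
    by simp
qed

lemma finite_uniform_lower_bound:
  fixes f :: "nat \<Rightarrow> 'a \<Rightarrow> real"
  assumes "finite S" "\<And>w. w \<in> S \<Longrightarrow> \<exists>e>0. \<forall>i. e \<le> f i w"
  shows "\<exists>e>0. e \<le> 1 \<and> (\<forall>w\<in>S. \<forall>i. e \<le> f i w)"
  using assms
proof (induction S rule: finite_induct)
  case empty
  show ?case by (intro exI[of _ 1]) simp
next
  case (insert w S)
  then obtain e e' where "e > 0" "e \<le> 1" "\<forall>w\<in>S. \<forall>i. e \<le> f i w"
    and "e' > 0" "\<forall>i. e' \<le> f i w"
    by blast
  then show ?case
    by (intro exI[of _ "min e e'"]) (auto simp: min.coboundedI1 min.coboundedI2)
qed

lemma Phi_kernel_E:
  assumes "prechart \<beta>" "(u, v) \<in> Phi_kernel \<beta>"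
  shows "E \<beta> u \<subseteq> E \<beta> v"
proof
  fix n assume "n \<in> E \<beta> u"
  show "n \<in> E \<beta> v"
  proof (rule ccontr)
    assume "n \<notin> E \<beta> v"
    with \<open>n \<in> E \<beta> u\<close> have "1 \<le> Phi_iter \<beta> (Suc i) u v" for i
      unfolding E_def by (simp add: Phi_ge_1_if_variable_unmatched assms(1))
    with Phi_kernel_lower_bound[OF assms] show False
      by fastforce
  qed
qed

lemma Phi_kernel_transition:
  assumes "prechart \<beta>" "(u, v) \<in> Phi_kernel \<beta>" "trans_step \<beta> u a u'"
  shows "\<exists>v'. trans_step \<beta> v a v' \<and> (u', v') \<in> Phi_kernel \<beta>"
proof (rule ccontr)
  assume "\<nexists>v'. trans_step \<beta> v a v' \<and> (u', v') \<in> Phi_kernel \<beta>"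
  then have "\<exists>e>0. \<forall>i. e \<le> Phi_iter \<beta> i u' v'" if "v' \<in> {v'. trans_step \<beta> v a v'}" for v'
    using that unfolding Phi_kernel_def by (auto simp: not_less)
  from finite_uniform_lower_bound[where f = "\<lambda>i. Phi_iter \<beta> i u'",
      OF finite_successors[OF assms(1)] this]
  obtain e where "e > 0" "e \<le> 1"
    and far: "\<And>v' i. trans_step \<beta> v a v' \<Longrightarrow> e \<le> Phi_iter \<beta> i u' v'"
    by blast
  have "e / 2 \<le> Phi_iter \<beta> (Suc i) u v" for i
    using Phi_ge_if_transition_unmatched[where d = "Phi_iter \<beta> i", OF assms(1,3) \<open>e \<le> 1\<close> far]
    by simp
  with Phi_kernel_lower_bound[OF assms(1,2)] \<open>e > 0\<close> show False
    by fastforce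
qed

lemma Phi_kernel_bisimulation:
  assumes "prechart \<beta>"
  shows "bisimulation \<beta> (Phi_kernel \<beta>)"
proof -
  have "E \<beta> u = E \<beta> v
    \<and> (\<forall>a u'. trans_step \<beta> u a u' \<longrightarrow> (\<exists>v'. trans_step \<beta> v a v' \<and> (u', v') \<in> Phi_kernel \<beta>))
    \<and> (\<forall>a v'. trans_step \<beta> v a v' \<longrightarrow> (\<exists>u'. trans_step \<beta> u a u' \<and> (u', v') \<in> Phi_kernel \<beta>))"
    if uv: "(u, v) \<in> Phi_kernel \<beta>" for u v
  proof (intro conjI allI impI)
    from uv have vu: "(v, u) \<in> Phi_kernel \<beta>"
      by (rule Phi_kernel_commute)
    show "E \<beta> u = E \<beta> v"
      using Phi_kernel_E[OF assms uv] Phi_kernel_E[OF assms vu] by (rule order.antisym)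
    show "\<exists>v'. trans_step \<beta> v a v' \<and> (u', v') \<in> Phi_kernel \<beta>" if "trans_step \<beta> u a u'" for a u'
      by (rule Phi_kernel_transition[OF assms uv that])
    fix a v' assume "trans_step \<beta> v a v'"
    then obtain u' where "trans_step \<beta> u a u'" "(v', u') \<in> Phi_kernel \<beta>"
      using Phi_kernel_transition[OF assms vu] by blast
    then show "\<exists>u'. trans_step \<beta> u a u' \<and> (u', v') \<in> Phi_kernel \<beta>"
      by (blast intro: Phi_kernel_commute)
  qed
  then show ?thesis
    unfolding bisimulation_def by auto
qed

theorem mainTheorem8:
  fixes \<beta> :: "('a, 'x) prechart" and x y :: 'x
  assumes "prechart \<beta>"
    and "locally_finite \<beta>"
    and "\<not> bisimilar \<beta> x y"
  shows "\<exists>i::nat. Phi_iter \<beta> i x y = Phi_iter \<beta> (Suc i) x y"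
proof (rule ccontr)
  assume "\<not> ?thesis"
  then have "Phi_iter \<beta> (Suc i) x y < Phi_iter \<beta> i x y" for i
    using Phi_iter_Suc_le[OF assms(1), of i x y] by (metis order_less_le)
  then have "Phi_iter \<beta> i x y \<le> (1/2) ^ i" for i
    by (rule half_powers_strict_decseq_le[OF Phi_iter_in_half_powers[OF assms(1)]])
  then have "(x, y) \<in> Phi_kernel \<beta>"
    by (rule Phi_kernelI)
  with Phi_kernel_bisimulation[OF assms(1)] assms(3) show False
    unfolding bisimilar_def by blast
qed

end
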